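(* Let $A=\{a_1,\dots,a_n\}$ and $L\subseteq a_1^*\cdots a_n^*$. Let $T=\{(a_1^{k_1}\cdots a_n^{k_n},\ a_1^{2k_1}\cdots a_n^{2k_n})\mid k_1,\dots,k_n\ge0\}$, $T(\downarrow L)=\{w\mid \exists v\in\downarrow L,\ (v,w)\in T\}$, and $K=\{a_1^{2k_1+1}\cdots a_n^{2k_n+1}\mid k_1,\dots,k_n\ge0\}$. Then $T(\downarrow L)$ and $K$ are not separable by a piecewise testable language if and only if $\downarrow L=a_1^*\cdots a_n^*$.
   Context: $\downarrow L$ denotes the set of all subsequences of words of $L$. A piecewise testable language is a finite Boolean combination of languages $A^*c_1A^*\cdots A^*c_kA^*$; two languages are separable by PTL if some piecewise testable $S$ contains the first and is disjoint from the second. *)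

theory Defs
  imports Main "HOL-Library.Sublist"
begin

text \<open>Words are lists; the alphabet is given as a list of distinct letters as = [a_1,...,a_n].
  Subsequence order: subseq u v (HOL-Library.Sublist) means u is a (scattered) subsequence of v.\<close>

definition down :: "'a list set \<Rightarrow> 'a list set" where
  "down L = {u. \<exists>v\<in>L. subseq u v}"

definition blocks :: "'a list \<Rightarrow> nat list \<Rightarrow> 'a list" where
  "blocks as ks = concat (map2 (\<lambda>a k. replicate k a) as ks)"

definition blockLang :: "'a list \<Rightarrow> 'a list set" where
  "blockLang as = {blocks as ks | ks. length ks = length as}"

definition relT :: "'a list \<Rightarrow> ('a list \<times> 'a list) set" where
  "relT as = {(blocks as ks, blocks as (map (\<lambda>k. 2 * k) ks)) | ks. length ks = length as}"

definition applyRel :: "('a list \<times> 'a list) set \<Rightarrow> 'a list set \<Rightarrow> 'a list set" where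
  "applyRel T L = {w. \<exists>v\<in>L. (v, w) \<in> T}"

definition langK :: "'a list \<Rightarrow> 'a list set" where
  "langK as = {blocks as (map (\<lambda>k. 2 * k + 1) ks) | ks. length ks = length as}"

inductive_set ptl :: "'a set \<Rightarrow> 'a list set set" for A :: "'a set" where
  gen: "set cs \<subseteq> A \<Longrightarrow> {u \<in> lists A. subseq cs u} \<in> ptl A"
| compl: "S \<in> ptl A \<Longrightarrow> lists A - S \<in> ptl A"
| union: "S \<in> ptl A \<Longrightarrow> R \<in> ptl A \<Longrightarrow> S \<union> R \<in> ptl A"
| inter: "S \<in> ptl A \<Longrightarrow> R \<in> ptl A \<Longrightarrow> S \<inter> R \<in> ptl A"

definition ptl_separable :: "'a set \<Rightarrow> 'a list set \<Rightarrow> 'a list set \<Rightarrow> bool" where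
  "ptl_separable A L1 L2 \<longleftrightarrow> (\<exists>S \<in> ptl A. L1 \<subseteq> S \<and> S \<inter> L2 = {})"

end

theory Submission
  imports Defs
begin

(* Write n = length as and a_i = as!i.  Every subword of a block word
   a_1^k_1 ... a_n^k_n is again a block word with smaller exponents, and occurrences
   of a_i are counted exactly by the i-th exponent (the letters are distinct).

   The two directions of the theorem rest on two general facts about piecewise
   testable languages over an alphabet A:
   (1) Simon invariance: every S in ptl A is a union of classes of the relation
       "u and v have the same subwords of length <= m", for some m;
   (2) saturation: if S is a union of classes of "u and v have the same subwords
       from C", for a finite set C of words, then S is in ptl A.
   If down L is all of a_1^* ... a_n^*, then the words a_1^2m ... a_n^2m in T(down L)
   and a_1^(2m+1) ... a_n^(2m+1) in K have the same subwords of length <= m, so by (1)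
   no piecewise testable language separates.  If some block word with exponents ks is
   missing from down L, then every word of T(down L) has, for some i, fewer than
   2 k_i letters a_i, and an even count, while words in K have odd counts; hence the
   finitely many test words a_i^e (e <= 2 k_i) separate, and (2) yields a
   piecewise testable separator. *)

section \<open>Block words\<close>

lemma blocks_Nil [simp]: "blocks [] ks = []" "blocks as [] = []"
  by (auto simp: blocks_def)

lemma blocks_Cons [simp]: "blocks (a # as) (k # ks) = replicate k a @ blocks as ks"
  by (simp add: blocks_def)

lemma count_list_replicate: "count_list (replicate k a) x = (if a = x then k else 0)"
  by (induction k) auto

lemma subseq_replicate_iff_count: "subseq (replicate e a) u \<longleftrightarrow> e \<le> count_list u a"
proof
  assume "subseq (replicate e a) u"
  then have "subseq (filter ((=) a) (replicate e a)) (filter ((=) a) u)"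
    by (rule subseq_filter)
  then have "length (filter ((=) a) (replicate e a)) \<le> length (filter ((=) a) u)"
    by (rule list_emb_length)
  then show "e \<le> count_list u a" by (simp add: count_list_eq_length_filter)
next
  assume e: "e \<le> count_list u a"
  have "replicate e a = take e (filter ((=) a) u)"
    using e replicate_length_filter[of a u]
    by (metis count_list_eq_length_filter min_absorb1 take_replicate)
  then have "subseq (replicate e a) (filter ((=) a) u)"
    by (simp add: take_is_prefix prefix_imp_subseq)
  then show "subseq (replicate e a) u"
    using subseq_filter_left subseq_order.order_trans by blast
qed

lemma subseq_replicateD:
  assumes "subseq w (replicate k a)"
  shows "w = replicate (length w) a \<and> length w \<le> k"
proof
  have "y = a" if "y \<in> set w" for y
    using list_emb_set[OF assms that] by (simp split: if_splits)
  then show "w = replicate (length w) a"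
    by (simp add: replicate_length_same)
  show "length w \<le> k" using list_emb_length[OF assms] by simp
qed

lemma blocks_mono:
  "list_all2 (\<le>) js ks \<Longrightarrow> subseq (blocks as js) (blocks as ks)"
proof (induction js ks arbitrary: as rule: list_all2_induct)
  case Nil
  then show ?case by simp
next
  case (Cons j js k ks)
  show ?case
  proof (cases as)
    case (Cons a as')
    have "subseq (replicate j a) (replicate k a)"
      using \<open>j \<le> k\<close> by (simp add: subseq_replicate_iff_count count_list_replicate)
    then show ?thesis
      using Cons.IH[of as'] Cons by (simp add: list_emb_append_mono)
  qed simp
qed

lemma subseq_blocks_conv:
  "subseq w (blocks as ks) \<Longrightarrow> length ks = length as \<Longrightarrow>
   \<exists>js. list_all2 (\<le>) js ks \<and> w = blocks as js"
proof (induction as arbitrary: ks w)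
  case Nil
  then show ?case by simp
next
  case (Cons a as)
  then obtain k ks' where ks: "ks = k # ks'" by (cases ks) auto
  with Cons.prems obtain w1 w2 where w: "w = w1 @ w2" "subseq w1 (replicate k a)"
    "subseq w2 (blocks as ks')" by (auto elim: subseq_appendE)
  obtain js where js: "list_all2 (\<le>) js ks'" "w2 = blocks as js"
    using Cons.IH[OF w(3)] Cons.prems(2) ks by auto
  have "w1 = replicate (length w1) a" "length w1 \<le> k"
    using subseq_replicateD[OF w(2)] by auto
  then show ?case
    using js w ks by (intro exI[of _ "length w1 # js"]) simp
qed

lemma set_blocks_subset: "set (blocks as ks) \<subseteq> set as"
proof (induction as arbitrary: ks)
  case (Cons a as)
  then show ?case by (cases ks) auto
qed simp

lemma blocks_in_lists: "blocks as ks \<in> lists (set as)"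
  using set_blocks_subset[of as ks] by (simp add: in_lists_conv_set subset_iff)

lemma blocks_exponent_le_length:
  "i < length js \<Longrightarrow> i < length as \<Longrightarrow> js ! i \<le> length (blocks as js)"
proof (induction as arbitrary: js i)
  case (Cons a as)
  then obtain j js' where "js = j # js'" by (cases js) auto
  with Cons show ?case by (cases i) fastforce+
qed simp

lemma count_list_blocks:
  "distinct as \<Longrightarrow> length ks = length as \<Longrightarrow> i < length as \<Longrightarrow>
   count_list (blocks as ks) (as ! i) = ks ! i"
proof (induction as arbitrary: ks i)
  case (Cons a as)
  then obtain k ks' where ks: "ks = k # ks'" by (cases ks) auto
  have "a \<notin> set (blocks as ks')"
    using set_blocks_subset[of as ks'] Cons.prems(1) by auto
  with Cons ks show ?case
    by (cases i) (auto simp: count_list_replicate)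
qed simp

section \<open>Simon's congruence on block words\<close>

definition simon_eq :: "nat \<Rightarrow> 'a list \<Rightarrow> 'a list \<Rightarrow> bool" where
  "simon_eq m u v \<longleftrightarrow> (\<forall>w. length w \<le> m \<longrightarrow> (subseq w u \<longleftrightarrow> subseq w v))"

lemma short_subseq_long_blocks:
  assumes "subseq w (blocks as ks)" "length ks = length as" "length ls = length as"
    and "\<forall>i<length as. m \<le> ls ! i" "length w \<le> m"
  shows "subseq w (blocks as ls)"
proof -
  obtain js where js: "list_all2 (\<le>) js ks" "w = blocks as js"
    using subseq_blocks_conv[OF assms(1,2)] by blast
  have "length js = length as" using js(1) assms(2) by (simp add: list_all2_lengthD)
  have "js ! i \<le> ls ! i" if "i < length as" for i
  proof -
    have "js ! i \<le> length w"
      using blocks_exponent_le_length[of i js as] \<open>length js = length as\<close> js(2) that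
      by simp
    then show ?thesis using assms(4,5) that by fastforce
  qed
  then have "list_all2 (\<le>) js ls"
    using \<open>length js = length as\<close> assms(3) by (simp add: list_all2_conv_all_nth)
  then show ?thesis using js(2) by (simp add: blocks_mono)
qed

lemma long_blocks_simon_eq:
  assumes "length ks = length as" "length ls = length as"
    and "\<forall>i<length as. m \<le> ks ! i \<and> m \<le> ls ! i"
  shows "simon_eq m (blocks as ks) (blocks as ls)"
proof -
  have "subseq w (blocks as ls)" if "subseq w (blocks as ks)" "length w \<le> m" for w
    using short_subseq_long_blocks[OF that(1) assms(1,2) _ that(2)] assms(3) by blast
  moreover have "subseq w (blocks as ks)" if "subseq w (blocks as ls)" "length w \<le> m" for w
    using short_subseq_long_blocks[OF that(1) assms(2,1) _ that(2)] assms(3) by blast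
  ultimately show ?thesis unfolding simon_eq_def by blast
qed

lemma down_closed: "v \<in> down L \<Longrightarrow> subseq u v \<Longrightarrow> u \<in> down L"
  unfolding down_def using subseq_order.order_trans by blast

lemma down_subset_blockLang:
  assumes "L \<subseteq> blockLang as"
  shows "down L \<subseteq> blockLang as"
proof
  fix u assume "u \<in> down L"
  then obtain v where v: "v \<in> L" "subseq u v" by (auto simp: down_def)
  then obtain ks where ks: "length ks = length as" "v = blocks as ks"
    using assms by (auto simp: blockLang_def)
  then obtain js where "list_all2 (\<le>) js ks" "u = blocks as js"
    using subseq_blocks_conv v(2) by blast
  then show "u \<in> blockLang as"
    using ks(1) by (auto simp: blockLang_def list_all2_lengthD)
qed

section \<open>Piecewise testable languages\<close>

definition simon_saturated :: "'a set \<Rightarrow> nat \<Rightarrow> 'a list set \<Rightarrow> bool" where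
  "simon_saturated A m S \<longleftrightarrow>
     (\<forall>u\<in>lists A. \<forall>v\<in>lists A. simon_eq m u v \<longrightarrow> (u \<in> S \<longleftrightarrow> v \<in> S))"

text \<open>Simon's congruence refines with the level, so saturation is inherited upwards.\<close>
lemma simon_saturated_mono:
  "simon_saturated A m S \<Longrightarrow> m \<le> n \<Longrightarrow> simon_saturated A n S"
  unfolding simon_saturated_def simon_eq_def by (meson order_trans)

lemma ptl_simon_saturated: "S \<in> ptl A \<Longrightarrow> \<exists>m. simon_saturated A m S"
proof (induction rule: ptl.induct)
  case (gen cs)
  have "simon_saturated A (length cs) {u \<in> lists A. subseq cs u}"
    by (auto simp: simon_saturated_def simon_eq_def)
  then show ?case ..
next
  case (compl S)
  then show ?case by (auto simp: simon_saturated_def)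
next
  case (union S R)
  then obtain m1 m2 where "simon_saturated A m1 S" "simon_saturated A m2 R" by blast
  then have "simon_saturated A (max m1 m2) S" "simon_saturated A (max m1 m2) R"
    by (auto intro: simon_saturated_mono)
  then have "simon_saturated A (max m1 m2) (S \<union> R)"
    by (auto simp: simon_saturated_def)
  then show ?case ..
next
  case (inter S R)
  then obtain m1 m2 where "simon_saturated A m1 S" "simon_saturated A m2 R" by blast
  then have "simon_saturated A (max m1 m2) S" "simon_saturated A (max m1 m2) R"
    by (auto intro: simon_saturated_mono)
  then have "simon_saturated A (max m1 m2) (S \<inter> R)"
    by (auto simp: simon_saturated_def)
  then show ?case ..
qed

definition subword_equiv :: "'a list set \<Rightarrow> 'a list \<Rightarrow> 'a list \<Rightarrow> bool" where
  "subword_equiv C u v \<longleftrightarrow> (\<forall>c\<in>C. subseq c u \<longleftrightarrow> subseq c v)"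

definition saturated :: "'a set \<Rightarrow> 'a list set \<Rightarrow> 'a list set \<Rightarrow> bool" where
  "saturated A C S \<longleftrightarrow>
     S \<subseteq> lists A \<and> (\<forall>u\<in>lists A. \<forall>v\<in>lists A. subword_equiv C u v \<longrightarrow> u \<in> S \<longrightarrow> v \<in> S)"

definition saturation :: "'a set \<Rightarrow> 'a list set \<Rightarrow> 'a list set \<Rightarrow> 'a list set" where
  "saturation A C Y = {u \<in> lists A. \<exists>w\<in>Y. subword_equiv C u w}"

lemma saturation_saturated: "saturated A C (saturation A C Y)"
  by (auto simp: saturated_def saturation_def subword_equiv_def)

lemma subset_saturation: "Y \<subseteq> lists A \<Longrightarrow> Y \<subseteq> saturation A C Y"
  by (auto simp: saturation_def subword_equiv_def)

text \<open>Conversely, a language saturated for a finite set of test words is piecewise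
  testable: split on the membership of one test word and recurse.\<close>
lemma saturated_in_ptl:
  "finite C \<Longrightarrow> C \<subseteq> lists A \<Longrightarrow> saturated A C S \<Longrightarrow> S \<in> ptl A"
proof (induction C arbitrary: S rule: finite_induct)
  case empty
  have "S = {} \<or> S = lists A"
    using empty.prems(2) by (auto simp: saturated_def subword_equiv_def)
  moreover have "lists A \<in> ptl A"
    using ptl.gen[of "[]" A] by simp
  ultimately show ?case
    using ptl.compl[of "lists A" A] by auto
next
  case (insert c C)
  define G where "G = {u \<in> lists A. subseq c u}"
  define S1 where "S1 = saturation A C (S \<inter> G)"
  define S2 where "S2 = saturation A C (S - G)"
  have CA: "C \<subseteq> lists A" using insert.prems(1) by simp
  have G: "G \<in> ptl A" unfolding G_def using insert.prems(1) by (intro ptl.gen) auto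
  have S1: "S1 \<in> ptl A" and S2: "S2 \<in> ptl A"
    unfolding S1_def S2_def using insert.IH[OF CA] saturation_saturated by blast+
  have SA: "S \<subseteq> lists A" using insert.prems(2) by (simp add: saturated_def)
  have closed: "v \<in> S" if "u \<in> S" "v \<in> lists A" "subword_equiv C u v"
    "subseq c u \<longleftrightarrow> subseq c v" for u v
    using insert.prems(2) that SA by (auto simp: saturated_def subword_equiv_def)
  have "S = (S1 \<inter> G) \<union> (S2 \<inter> (lists A - G))"
  proof
    show "S \<subseteq> (S1 \<inter> G) \<union> (S2 \<inter> (lists A - G))"
      using subset_saturation[of "S \<inter> G" A C] subset_saturation[of "S - G" A C] SA
      unfolding S1_def S2_def by blast
    show "(S1 \<inter> G) \<union> (S2 \<inter> (lists A - G)) \<subseteq> S"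
      using closed SA unfolding S1_def S2_def G_def saturation_def subword_equiv_def
      by blast
  qed
  then show ?case using G S1 S2 by (metis ptl.union ptl.inter ptl.compl)
qed

text \<open>If a_1^k_1 ... a_n^k_n is missing from down L, then every word of T(down L) and
  every word of K differ in whether they contain a_i^e, for some i and some e \<le> 2 k_i:
  the T-image has an even number 2 j_i < 2 k_i of letters a_i, K an odd number.\<close>
lemma test_word_distinguishes:
  assumes "distinct as" "length ks = length as" "blocks as ks \<notin> down L"
    and "u \<in> langK as" "w \<in> applyRel (relT as) (down L)"
  shows "\<exists>i<length as. \<exists>e\<le>2 * ks ! i.
           subseq (replicate e (as ! i)) u \<noteq> subseq (replicate e (as ! i)) w"
proof -
  obtain ls where ls: "length ls = length as" "u = blocks as (map (\<lambda>k. 2 * k + 1) ls)"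
    using assms(4) by (auto simp: langK_def)
  obtain js where js: "length js = length as" "blocks as js \<in> down L"
    "w = blocks as (map (\<lambda>k. 2 * k) js)"
    using assms(5) by (auto simp: applyRel_def relT_def)
  have "\<not> list_all2 (\<le>) ks js"
    using blocks_mono down_closed js(2) assms(3) by blast
  then obtain i where i: "i < length as" "js ! i < ks ! i"
    using assms(2) js(1) by (auto simp: list_all2_conv_all_nth not_le)
  define x where "x = count_list u (as ! i)"
  define y where "y = count_list w (as ! i)"
  have x: "x = 2 * ls ! i + 1" and y: "y = 2 * js ! i"
    unfolding x_def y_def ls(2) js(3)
    using count_list_blocks[OF assms(1)] ls(1) js(1) i(1) by simp_all
  have "subseq (replicate (Suc (min x y)) (as ! i)) u \<noteq>
        subseq (replicate (Suc (min x y)) (as ! i)) w"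
    unfolding subseq_replicate_iff_count x_def[symmetric] y_def[symmetric]
    using x y by presburger
  moreover have "Suc (min x y) \<le> 2 * ks ! i" using y i(2) by simp
  ultimately show ?thesis using i(1) by blast
qed

text \<open>Hence the finitely many test words a_i^e (e \<le> 2 k_i) yield a piecewise
  testable separator: the saturation of T(down L).\<close>
lemma separable_if_block_word_missing:
  assumes "distinct as" "length ks = length as" "blocks as ks \<notin> down L"
  shows "ptl_separable (set as) (applyRel (relT as) (down L)) (langK as)"
proof -
  define C where "C = (\<lambda>(i, e). replicate e (as ! i)) ` (SIGMA i:{..<length as}. {..2 * ks ! i})"
  define X where "X = applyRel (relT as) (down L)"
  define S where "S = saturation (set as) C X"
  have "finite C" "C \<subseteq> lists (set as)"
    unfolding C_def by (auto simp: nth_mem)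
  then have S_ptl: "S \<in> ptl (set as)"
    unfolding S_def using saturated_in_ptl saturation_saturated by blast
  have "w \<in> lists (set as)" if w: "w \<in> X" for w
  proof -
    obtain js where "w = blocks as (map (\<lambda>k. 2 * k) js)"
      using w unfolding X_def applyRel_def relT_def by blast
    then show ?thesis by (simp only: blocks_in_lists)
  qed
  then have X_S: "X \<subseteq> S"
    unfolding S_def by (intro subset_saturation subsetI)
  have "\<not> subword_equiv C u w" if "u \<in> langK as" "w \<in> X" for u w
    using test_word_distinguishes[OF assms that[unfolded X_def]]
    unfolding subword_equiv_def C_def by fastforce
  then have "S \<inter> langK as = {}"
    unfolding S_def saturation_def by blast
  with S_ptl X_S show ?thesis
    unfolding ptl_separable_def X_def by blast
qed

text \<open>If down L is all of a_1^* ... a_n^*, then a_1^2m ... a_n^2m \<in> T(down L) and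
  a_1^(2m+1) ... a_n^(2m+1) \<in> K are Simon-congruent of level m, for every m.\<close>
lemma not_separable_if_full:
  assumes "blockLang as \<subseteq> down L"
  shows "\<not> ptl_separable (set as) (applyRel (relT as) (down L)) (langK as)"
proof
  assume "ptl_separable (set as) (applyRel (relT as) (down L)) (langK as)"
  then obtain S where S: "S \<in> ptl (set as)" "applyRel (relT as) (down L) \<subseteq> S"
    "S \<inter> langK as = {}" by (auto simp: ptl_separable_def)
  obtain m where m: "simon_saturated (set as) m S"
    using ptl_simon_saturated[OF S(1)] by blast
  define ms where "ms = replicate (length as) m"
  define u where "u = blocks as (map (\<lambda>k. 2 * k) ms)"
  define v where "v = blocks as (map (\<lambda>k. 2 * k + 1) ms)"
  have "blocks as ms \<in> blockLang as"
    unfolding blockLang_def ms_def by auto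
  moreover have "(blocks as ms, u) \<in> relT as"
    unfolding relT_def u_def by (rule CollectI, rule exI[of _ ms]) (simp add: ms_def)
  ultimately have u_S: "u \<in> S"
    using assms S(2) unfolding applyRel_def by blast
  have v_K: "v \<in> langK as"
    unfolding langK_def v_def by (rule CollectI, rule exI[of _ ms]) (simp add: ms_def)
  have "simon_eq m u v"
    unfolding u_def v_def ms_def by (rule long_blocks_simon_eq) auto
  moreover have "u \<in> lists (set as)" "v \<in> lists (set as)"
    unfolding u_def v_def by (rule blocks_in_lists)+
  ultimately have "u \<in> S \<longleftrightarrow> v \<in> S"
    using m unfolding simon_saturated_def by blast
  with u_S v_K S(3) show False by blast
qed

theorem mainTheorem9:
  fixes as :: "'a list" and L :: "'a list set"
  assumes "distinct as"
    and "L \<subseteq> blockLang as"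
  shows "\<not> ptl_separable (set as) (applyRel (relT as) (down L)) (langK as)
           \<longleftrightarrow> down L = blockLang as"
proof
  assume "\<not> ptl_separable (set as) (applyRel (relT as) (down L)) (langK as)"
  then have "blockLang as \<subseteq> down L"
    using separable_if_block_word_missing[OF assms(1)] by (auto simp: blockLang_def)
  then show "down L = blockLang as"
    using down_subset_blockLang[OF assms(2)] by blast
next
  assume "down L = blockLang as"
  then show "\<not> ptl_separable (set as) (applyRel (relT as) (down L)) (langK as)"
    by (intro not_separable_if_full) simp
qed

end
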